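(* Let ${\cal H}\subset{\cal H}_0$, ${\mathcal D}$, $b$, $\mu_\ell^{-1}$, $\epsilon_\ell$, $a_\ell$ ($\ell=1,2$) be as in the context (the standing assumptions there hold), let ${\cal H}_N\subset{\cal H}$ be a finite-dimensional subspace with associated Galerkin matrices $\mathsf A_1,\mathsf A_2$ and $\mathsf D$, $m_\pm$ as in the context. If there exists $0<C_{{\rm dis},N,2}<\infty$ such that $$\inf_{u_N\in{\cal H}_N\setminus\{0\}}\sup_{v_N\in{\cal H}_N\setminus\{0\}}\frac{|a_2(u_N,v_N)|}{\|u_N\|_{{\cal H}}\|v_N\|_{{\cal H}}}\ge\frac{1}{C_{{\rm dis},N,2}}$$ and, for all $v_N\in{\cal H}_N\setminus\{0\}$, $\sup_{u_N\in{\cal H}_N\setminus\{0\}}|a_2(u_N,v_N)|>0$, then $\mathsf A_2^{-1}$ exists and $$\max\Big\{\|\mathsf I-\mathsf A_2^{-1}\mathsf A_1\|_{\mathsf D},\ \|\mathsf I-\mathsf A_1\mathsf A_2^{-1}\|_{\mathsf D^{-1}}\Big\}\le\Big(\|\mu_1^{-1}-\mu_2^{-1}\|_{{\cal H}_0\to{\cal H}_0}+\|\epsilon_1-\epsilon_2\|_{{\cal H}_0\to{\cal H}_0}\Big)C_{{\rm dis},N,2}.$$ Furthermore, if $\mu_1=\mu_2$, then $$\max\Big\{\|\mathsf I-\mathsf A_2^{-1}\mathsf A_1\|_2,\ \|\mathsf I-\mathsf A_1\mathsf A_2^{-1}\|_2\Big\}\le\frac{m_+}{m_-}\|\epsilon_1-\epsilon_2\|_{{\cal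 H}_0\to{\cal H}_0}C_{{\rm dis},N,2}.$$
   Context: Standing assumptions: ${\cal H}\subset{\cal H}_0$ are complex Hilbert spaces with $\|v\|_{{\cal H}_0}\le\|v\|_{{\cal H}}$ for $v\in{\cal H}$, and ${\cal H}_0$ is identified with its dual so that ${\cal H}\subset{\cal H}_0\subset{\cal H}^*$. ${\mathcal D}:{\cal H}\to{\cal H}_0$ is linear with $\|{\mathcal D}\|_{{\cal H}\to{\cal H}_0}\le 1$; $b(\cdot,\cdot)$ is a continuous sesquilinear form on ${\cal H}$; for $\ell=1,2$, $\mu_\ell^{-1}:{\cal H}_0\to{\cal H}_0$ and $\epsilon_\ell:{\cal H}_0\to{\cal H}_0$ are bounded linear operators, and $a_\ell(u,v):=(\mu_\ell^{-1}{\mathcal D}u,{\mathcal D}v)_{{\cal H}_0}+b(u,v)-(\epsilon_\ell u,v)_{{\cal H}_0}$. For $\ell=1,2$ there exist $C_{{\rm G1},\ell},C_{{\rm G2},\ell}>0$ with $|a_\ell(v,v)+C_{{\rm G2},\ell}\|v\|_{{\cal H}_0}^2|\ge C_{{\rm G1},\ell}\|v\|_{{\cal H}}^2$ for all $v\in{\cal H}$. Discrete notation: ${\cal H}_N\subset{\cal H}$ has basis $\{\phi_j\}_{j=1}^N$; $(\mathsf{A}_\ell)_{ij}=a_\ell(\phi_j,\phi_i)$. $\mathsf{D}$ is the Hermitian positive-definite matrix such that, writing $\|\mathbf V\|_{\mathsf D}:=(\mathsf D\mathbf V,\mathbf V)_2^{1/2}$, one has $\|\sum_j V_j\phi_j\|_{{\cal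 H}}=\|\mathbf V\|_{\mathsf D}$ for all $\mathbf V\in\mathbb{C}^N$; $\|\mathbf V\|_{\mathsf D^{-1}}:=(\mathsf D^{-1}\mathbf V,\mathbf V)_2^{1/2}$; matrix norms $\|\cdot\|_{\mathsf D}$, $\|\cdot\|_{\mathsf D^{-1}}$, $\|\cdot\|_2$ are those induced by the corresponding vector norms ($\|\cdot\|_2$ Euclidean). $m_\pm>0$ are such that $m_-\|\mathbf V\|_2\le\|\sum_jV_j\phi_j\|_{{\cal H}_0}\le m_+\|\mathbf V\|_2$ for all $\mathbf V\in\mathbb{C}^N$. *)

theory Defs
  imports "HOL-Analysis.Analysis"
begin

text \<open>Complex inner product spaces are modelled as a carrier set S inside a complex vector space given by
an explicit scalar multiplication sc (with vector_space sc) together with an explicit sesquilinear form ip (linear in the first argument,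
conjugate-linear in the second).\<close>

definition ipnorm :: "('v \<Rightarrow> 'v \<Rightarrow> complex) \<Rightarrow> 'v \<Rightarrow> real" where
  "ipnorm ip x = sqrt (Re (ip x x))"

definition cinner_space :: "(complex \<Rightarrow> 'v \<Rightarrow> 'v) \<Rightarrow> 'v::ab_group_add set \<Rightarrow> ('v \<Rightarrow> 'v \<Rightarrow> complex) \<Rightarrow> bool" where
  "cinner_space sc S ip \<longleftrightarrow>
     0 \<in> S \<and> (\<forall>x\<in>S. \<forall>y\<in>S. x + y \<in> S) \<and> (\<forall>c. \<forall>x\<in>S. sc c x \<in> S) \<and>
     (\<forall>x\<in>S. \<forall>y\<in>S. \<forall>z\<in>S. ip (x + y) z = ip x z + ip y z) \<and>
     (\<forall>c. \<forall>x\<in>S. \<forall>y\<in>S. ip (sc c x) y = c * ip x y) \<and>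
     (\<forall>x\<in>S. \<forall>y\<in>S. ip y x = cnj (ip x y)) \<and>
     (\<forall>x\<in>S. Im (ip x x) = 0 \<and> Re (ip x x) \<ge> 0) \<and>
     (\<forall>x\<in>S. ip x x = 0 \<longrightarrow> x = 0)"

definition hilbert_space :: "(complex \<Rightarrow> 'v \<Rightarrow> 'v) \<Rightarrow> 'v::ab_group_add set \<Rightarrow> ('v \<Rightarrow> 'v \<Rightarrow> complex) \<Rightarrow> bool" where
  "hilbert_space sc S ip \<longleftrightarrow> cinner_space sc S ip \<and>
     (\<forall>X. (\<forall>n. X n \<in> S) \<and>
          (\<forall>e>0. \<exists>M. \<forall>m\<ge>M. \<forall>n\<ge>M. ipnorm ip (X m - X n) < e) \<longrightarrow>
          (\<exists>l\<in>S. (\<lambda>n. ipnorm ip (X n - l)) \<longlonglongrightarrow> 0))"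

definition clinear_on :: "(complex \<Rightarrow> 'v \<Rightarrow> 'v) \<Rightarrow> (complex \<Rightarrow> 'w \<Rightarrow> 'w) \<Rightarrow> 'v::ab_group_add set \<Rightarrow> ('v \<Rightarrow> 'w::ab_group_add) \<Rightarrow> bool" where
  "clinear_on sc sc' S T \<longleftrightarrow> (\<forall>x\<in>S. \<forall>y\<in>S. T (x + y) = T x + T y) \<and>
     (\<forall>c. \<forall>x\<in>S. T (sc c x) = sc' c (T x))"

text \<open>Bounded linear operator on the Hilbert space H0 (= the whole type) w.r.t. the norm of ip0.\<close>
definition bounded_op :: "(complex \<Rightarrow> 'v \<Rightarrow> 'v) \<Rightarrow> ('v \<Rightarrow> 'v \<Rightarrow> complex) \<Rightarrow> ('v::ab_group_add \<Rightarrow> 'v) \<Rightarrow> bool" where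
  "bounded_op sc ip0 T \<longleftrightarrow> clinear_on sc sc UNIV T \<and>
     (\<exists>K. \<forall>x. ipnorm ip0 (T x) \<le> K * ipnorm ip0 x)"

definition opnorm :: "('v \<Rightarrow> 'v \<Rightarrow> complex) \<Rightarrow> ('v::ab_group_add \<Rightarrow> 'v) \<Rightarrow> real" where
  "opnorm ip0 T = Sup {ipnorm ip0 (T x) / ipnorm ip0 x | x. x \<noteq> 0}"

definition cont_sesq :: "(complex \<Rightarrow> 'v \<Rightarrow> 'v) \<Rightarrow> 'v::ab_group_add set \<Rightarrow> ('v \<Rightarrow> 'v \<Rightarrow> complex) \<Rightarrow> ('v \<Rightarrow> 'v \<Rightarrow> complex) \<Rightarrow> bool" where
  "cont_sesq sc S ip b \<longleftrightarrow>
     (\<forall>x\<in>S. \<forall>y\<in>S. \<forall>z\<in>S. b (x + y) z = b x z + b y z) \<and>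
     (\<forall>x\<in>S. \<forall>y\<in>S. \<forall>z\<in>S. b z (x + y) = b z x + b z y) \<and>
     (\<forall>c. \<forall>x\<in>S. \<forall>y\<in>S. b (sc c x) y = c * b x y) \<and>
     (\<forall>c. \<forall>x\<in>S. \<forall>y\<in>S. b x (sc c y) = cnj c * b x y) \<and>
     (\<exists>K. \<forall>x\<in>S. \<forall>y\<in>S. cmod (b x y) \<le> K * ipnorm ip x * ipnorm ip y)"

definition aform :: "('v \<Rightarrow> 'v \<Rightarrow> complex) \<Rightarrow> ('v \<Rightarrow> 'v) \<Rightarrow> ('v \<Rightarrow> 'v \<Rightarrow> complex)
    \<Rightarrow> ('v \<Rightarrow> 'v) \<Rightarrow> ('v \<Rightarrow> 'v) \<Rightarrow> 'v \<Rightarrow> 'v \<Rightarrow> complex" where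
  "aform ip0 Dop b muinv eps u v = ip0 (muinv (Dop u)) (Dop v) + b u v - ip0 (eps u) v"

definition ip2 :: "complex^'n \<Rightarrow> complex^'n \<Rightarrow> complex" where
  "ip2 V W = (\<Sum>i\<in>UNIV. V $ i * cnj (W $ i))"

definition comb :: "(complex \<Rightarrow> 'v \<Rightarrow> 'v) \<Rightarrow> ('n::finite \<Rightarrow> 'v::ab_group_add) \<Rightarrow> complex^'n \<Rightarrow> 'v" where
  "comb sc phi V = (\<Sum>j\<in>UNIV. sc (V $ j) (phi j))"

definition wnorm :: "complex^'n^'n \<Rightarrow> complex^'n \<Rightarrow> real" where
  "wnorm M V = sqrt (Re (ip2 (M *v V) V))"

definition matnorm :: "(complex^'n \<Rightarrow> real) \<Rightarrow> complex^'n^'n \<Rightarrow> real" where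
  "matnorm nv M = Sup {nv (M *v V) / nv V | V. V \<noteq> 0}"

end

theory Submission
  imports Defs
begin

(* On the discrete space, (A2 - A1) V . Y is the difference a2 - a1 of the two forms evaluated at
   the functions with coefficient vectors V and Y, so it is bounded by
   (|mu1^-1 - mu2^-1| + |eps1 - eps2|) |u|_H |v|_H, and by |eps1 - eps2| |u|_0 |v|_0 when mu1 = mu2.
   The discrete inf-sup condition says |W|_D <= Cdis sup_Y |(A2 W, Y)_2| / |Y|_D; it makes A2
   injective, hence invertible. Applied to W = (I - A2^-1 A1) V, for which A2 W = (A2 - A1) V, it
   bounds the left residual. Applied to W = A2^-1 V it bounds the right residual
   (I - A1 A2^-1) V = (A2 - A1) W by duality, because the D^-1-norm is the dual of the D-norm with
   respect to (.,.)_2. When mu1 = mu2 the same argument runs with the H0-norm of the discrete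
   functions, which is equivalent to the Euclidean norm with constants m- and m+. *)

locale sesquilinear_form =
  fixes sc :: "complex \<Rightarrow> 'v::ab_group_add \<Rightarrow> 'v" and S :: "'v set" and f :: "'v \<Rightarrow> 'v \<Rightarrow> complex"
  assumes zero_mem: "0 \<in> S"
    and add_mem: "x \<in> S \<Longrightarrow> y \<in> S \<Longrightarrow> x + y \<in> S"
    and scale_mem: "x \<in> S \<Longrightarrow> sc c x \<in> S"
    and add_left: "x \<in> S \<Longrightarrow> y \<in> S \<Longrightarrow> z \<in> S \<Longrightarrow> f (x + y) z = f x z + f y z"
    and add_right: "x \<in> S \<Longrightarrow> y \<in> S \<Longrightarrow> z \<in> S \<Longrightarrow> f z (x + y) = f z x + f z y"
    and scale_left: "x \<in> S \<Longrightarrow> y \<in> S \<Longrightarrow> f (sc c x) y = c * f x y"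
    and scale_right: "x \<in> S \<Longrightarrow> y \<in> S \<Longrightarrow> f x (sc c y) = cnj c * f x y"
begin

lemma zero_left: "z \<in> S \<Longrightarrow> f 0 z = 0"
  using add_left[OF zero_mem zero_mem, of z] by simp

lemma zero_right: "z \<in> S \<Longrightarrow> f z 0 = 0"
  using add_right[OF zero_mem zero_mem, of z] by simp

lemma diff_left: "x \<in> S \<Longrightarrow> y \<in> S \<Longrightarrow> x - y \<in> S \<Longrightarrow> z \<in> S \<Longrightarrow> f (x - y) z = f x z - f y z"
  using add_left[of "x - y" y z] by simp

lemma sum_mem: "(\<And>j. p j \<in> S) \<Longrightarrow> (\<Sum>j\<in>I. sc (c j) (p j)) \<in> S"
  by (induction I rule: infinite_finite_induct) (simp_all add: zero_mem add_mem scale_mem)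

lemma sum_left:
  assumes "\<And>j. p j \<in> S" and "w \<in> S"
  shows "f (\<Sum>j\<in>I. sc (c j) (p j)) w = (\<Sum>j\<in>I. c j * f (p j) w)"
  by (induction I rule: infinite_finite_induct)
    (simp_all add: assms zero_left add_left scale_left scale_mem sum_mem)

lemma sum_right:
  assumes "\<And>j. p j \<in> S" and "w \<in> S"
  shows "f w (\<Sum>j\<in>I. sc (c j) (p j)) = (\<Sum>j\<in>I. cnj (c j) * f w (p j))"
  by (induction I rule: infinite_finite_induct)
    (simp_all add: assms zero_right add_right scale_right scale_mem sum_mem)

lemma comb_mem: "(\<And>j. phi j \<in> S) \<Longrightarrow> comb sc phi V \<in> S"
  unfolding comb_def by (rule sum_mem)

lemma galerkin_matrix:
  fixes phi :: "'n::finite \<Rightarrow> 'v" and A :: "complex^'n^'n"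
  assumes phi: "\<And>j. phi j \<in> S" and A: "\<And>i j. A $ i $ j = f (phi j) (phi i)"
  shows "f (comb sc phi V) (comb sc phi Y) = ip2 (A *v V) Y"
proof -
  have "f (comb sc phi V) (comb sc phi Y) = (\<Sum>i\<in>UNIV. \<Sum>j\<in>UNIV. A $ i $ j * V $ j * cnj (Y $ i))"
    unfolding comb_def
    by (simp add: sum_left sum_right phi sum_mem sum_distrib_left A mult.commute mult.left_commute)
  also have "\<dots> = ip2 (A *v V) Y"
    unfolding ip2_def matrix_vector_mult_def by (simp add: sum_distrib_right)
  finally show ?thesis .
qed

end

lemma quadratic_nonneg_imp_le:
  fixes a b P :: real
  assumes nonneg: "\<And>t. 0 \<le> a - 2*t*P + t^2*P*b" and "0 \<le> a" "0 \<le> b" "0 \<le> P"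
  shows "P \<le> a * b"
proof (cases "b = 0")
  case True
  show ?thesis
  proof (cases "P = 0")
    case False
    then have "0 \<le> a - 2 * (a + 1)" using nonneg[of "(a + 1) / P"] True by simp
    then show ?thesis using \<open>0 \<le> a\<close> by simp
  qed (simp add: assms)
next
  case False
  then have "0 \<le> a - P / b" using nonneg[of "1 / b"] by (simp add: power2_eq_square field_simps)
  then show ?thesis using False assms(3) by (simp add: field_simps)
qed

locale hermitian_form = sesquilinear_form +
  assumes conj_sym: "x \<in> S \<Longrightarrow> y \<in> S \<Longrightarrow> f y x = cnj (f x y)"
    and nonneg_diag: "x \<in> S \<Longrightarrow> 0 \<le> Re (f x x)"
begin

lemma diag_real: "x \<in> S \<Longrightarrow> f x x = of_real (Re (f x x))"
  using conj_sym[of x x] by (simp add: complex_eq_iff)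

lemma ipnorm_nonneg: "x \<in> S \<Longrightarrow> 0 \<le> ipnorm f x"
  unfolding ipnorm_def using nonneg_diag by simp

lemma ipnorm_square: "x \<in> S \<Longrightarrow> (ipnorm f x)^2 = Re (f x x)"
  unfolding ipnorm_def using nonneg_diag by simp

lemma ipnorm_zero: "ipnorm f 0 = 0"
  unfolding ipnorm_def using zero_left[OF zero_mem] by simp

lemma cauchy_schwarz:
  assumes x: "x \<in> S" and y: "y \<in> S"
  shows "cmod (f x y) \<le> ipnorm f x * ipnorm f y"
proof -
  define w a b where "w = f x y" and "a = Re (f x x)" and "b = Re (f y y)"
  have fxx: "f x x = of_real a" and fyy: "f y y = of_real b" and fyx: "f y x = cnj w"
    using diag_real[OF x] diag_real[OF y] conj_sym[OF x y] by (simp_all add: w_def a_def b_def)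
  have "0 \<le> a - 2*t*(cmod w)^2 + t^2*(cmod w)^2*b" for t
  proof -
    define z where "z = x + sc (- of_real t * w) y"
    have "z \<in> S" unfolding z_def by (simp add: x y add_mem scale_mem)
    moreover have "f z z = of_real a - 2 * of_real t * (w * cnj w) + (of_real t)^2 * (w * cnj w) * of_real b"
      unfolding z_def using x y
      by (simp add: add_left add_right scale_left scale_right add_mem scale_mem fxx fyy fyx
          w_def[symmetric] algebra_simps power2_eq_square)
    then have "f z z = of_real (a - 2*t*(cmod w)^2 + t^2*(cmod w)^2*b)"
      by (simp flip: complex_norm_square)
    ultimately show ?thesis using nonneg_diag by fastforce
  qed
  then have "(cmod w)^2 \<le> a * b"
    by (rule quadratic_nonneg_imp_le) (simp_all add: a_def b_def x y nonneg_diag)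
  then have "sqrt ((cmod w)^2) \<le> sqrt a * sqrt b"
    by (metis real_sqrt_le_iff real_sqrt_mult)
  then show ?thesis unfolding w_def a_def b_def ipnorm_def by simp
qed

lemma ipnorm_add_le:
  assumes x: "x \<in> S" and y: "y \<in> S"
  shows "ipnorm f (x + y) \<le> ipnorm f x + ipnorm f y"
proof -
  have xy: "x + y \<in> S" using add_mem[OF x y] .
  have "(ipnorm f (x + y))^2 = Re (f x x) + 2 * Re (f x y) + Re (f y y)"
    using conj_sym[OF x y] by (simp add: ipnorm_square xy x y add_left add_right)
  also have "\<dots> \<le> (ipnorm f x)^2 + 2 * (ipnorm f x * ipnorm f y) + (ipnorm f y)^2"
    using cauchy_schwarz[OF x y] complex_Re_le_cmod[of "f x y"] by (simp add: ipnorm_square x y)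
  also have "\<dots> = (ipnorm f x + ipnorm f y)^2" by algebra
  finally show ?thesis
    using ipnorm_nonneg[OF x] ipnorm_nonneg[OF y] ipnorm_nonneg[OF xy] by (simp add: power2_le_iff_abs_le)
qed

lemma ipnorm_uminus:
  assumes y: "y \<in> S" and my: "- y \<in> S"
  shows "ipnorm f (- y) = ipnorm f y"
proof -
  have "f (- y) z = - f y z" if "z \<in> S" for z
    using add_left[OF y my that] zero_left[OF that] by (simp add: add_eq_0_iff)
  moreover have "f y (- y) = - f y y"
    using add_right[OF y my y] zero_right[OF y] by (simp add: add_eq_0_iff)
  ultimately show ?thesis unfolding ipnorm_def using my by simp
qed

lemma ipnorm_diff_le:
  assumes "x \<in> S" "y \<in> S" "- y \<in> S"
  shows "ipnorm f (x - y) \<le> ipnorm f x + ipnorm f y"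
  using ipnorm_add_le[of x "- y"] ipnorm_uminus[of y] assms by simp

lemma ipnorm_le_if_dual_bound:
  assumes x: "x \<in> S" and c: "0 \<le> c" and bound: "\<And>y. y \<in> S \<Longrightarrow> cmod (f x y) \<le> c * ipnorm f y"
  shows "ipnorm f x \<le> c"
proof -
  have "(ipnorm f x)^2 \<le> cmod (f x x)"
    using complex_Re_le_cmod[of "f x x"] by (simp add: ipnorm_square x)
  also have "\<dots> \<le> c * ipnorm f x" using bound[OF x] .
  finally show ?thesis using c ipnorm_nonneg[OF x] by (cases "ipnorm f x = 0") (simp_all add: power2_eq_square)
qed

end

lemma hermitian_formI:
  assumes zero_mem: "0 \<in> S"
    and add_mem: "\<And>x y. x \<in> S \<Longrightarrow> y \<in> S \<Longrightarrow> x + y \<in> S"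
    and scale_mem: "\<And>c x. x \<in> S \<Longrightarrow> sc c x \<in> S"
    and add_left: "\<And>x y z. x \<in> S \<Longrightarrow> y \<in> S \<Longrightarrow> z \<in> S \<Longrightarrow> f (x + y) z = f x z + f y z"
    and scale_left: "\<And>c x y. x \<in> S \<Longrightarrow> y \<in> S \<Longrightarrow> f (sc c x) y = c * f x y"
    and conj_sym: "\<And>x y. x \<in> S \<Longrightarrow> y \<in> S \<Longrightarrow> f y x = cnj (f x y)"
    and nonneg_diag: "\<And>x. x \<in> S \<Longrightarrow> 0 \<le> Re (f x x)"
  shows "hermitian_form sc S f"
proof unfold_locales
  fix x y z assume "x \<in> S" "y \<in> S" "z \<in> S"
  then show "f z (x + y) = f z x + f z y"
    using conj_sym[of "x + y" z] conj_sym[of x z] conj_sym[of y z] add_left[of x y z] add_mem by simp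
next
  fix c x y assume "x \<in> S" "y \<in> S"
  then show "f x (sc c y) = cnj c * f x y"
    using conj_sym[of "sc c y" x] conj_sym[of y x] scale_left[of y x c] scale_mem by simp
qed (fact assms)+

locale inner_product_form = hermitian_form +
  assumes definite: "x \<in> S \<Longrightarrow> f x x = 0 \<Longrightarrow> x = 0"
begin

lemma ipnorm_pos:
  assumes "x \<in> S" "x \<noteq> 0"
  shows "0 < ipnorm f x"
proof -
  have "f x x \<noteq> 0" using definite assms by blast
  then have "Re (f x x) \<noteq> 0" using diag_real[OF \<open>x \<in> S\<close>] by (metis of_real_0)
  then show ?thesis using nonneg_diag[OF \<open>x \<in> S\<close>] unfolding ipnorm_def by simp
qed

end

lemma cinner_space_inner_product_form:
  assumes "cinner_space sc S ip"
  shows "inner_product_form sc S ip"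
proof -
  note ax = assms[unfolded cinner_space_def]
  have "hermitian_form sc S ip"
  proof (rule hermitian_formI)
    show "0 \<in> S" using ax by (elim conjE)
    show "\<And>x y. x \<in> S \<Longrightarrow> y \<in> S \<Longrightarrow> x + y \<in> S" using ax by (elim conjE) blast
    show "\<And>c x. x \<in> S \<Longrightarrow> sc c x \<in> S" using ax by (elim conjE) blast
    show "\<And>x y z. x \<in> S \<Longrightarrow> y \<in> S \<Longrightarrow> z \<in> S \<Longrightarrow> ip (x + y) z = ip x z + ip y z"
      using ax by (elim conjE) blast
    show "\<And>c x y. x \<in> S \<Longrightarrow> y \<in> S \<Longrightarrow> ip (sc c x) y = c * ip x y" using ax by (elim conjE) blast
    show "\<And>x y. x \<in> S \<Longrightarrow> y \<in> S \<Longrightarrow> ip y x = cnj (ip x y)" using ax by (elim conjE) blast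
    show "\<And>x. x \<in> S \<Longrightarrow> 0 \<le> Re (ip x x)" using ax by (elim conjE) blast
  qed
  moreover have "\<And>x. x \<in> S \<Longrightarrow> ip x x = 0 \<Longrightarrow> x = 0" using ax by (elim conjE) blast
  ultimately show ?thesis by (simp add: inner_product_form_def inner_product_form_axioms_def)
qed

lemma opnorm_ratio_le:
  fixes f :: "'v::ab_group_add \<Rightarrow> 'v \<Rightarrow> complex"
  assumes ip: "inner_product_form sc UNIV f"
    and K: "\<And>x. ipnorm f (T x) \<le> K * ipnorm f x" and x: "x \<noteq> 0"
  shows "ipnorm f (T x) / ipnorm f x \<le> opnorm f T"
  unfolding opnorm_def
proof (rule cSup_upper)
  show "ipnorm f (T x) / ipnorm f x \<in> {ipnorm f (T x) / ipnorm f x | x. x \<noteq> 0}" using x by blast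
  show "bdd_above {ipnorm f (T x) / ipnorm f x | x. x \<noteq> 0}"
  proof (rule bdd_aboveI, safe)
    fix y :: 'v assume "y \<noteq> 0"
    then have "0 < ipnorm f y" using inner_product_form.ipnorm_pos[OF ip] by simp
    then show "ipnorm f (T y) / ipnorm f y \<le> K" using K by (simp add: divide_le_eq)
  qed
qed

lemma opnorm_bound:
  fixes f :: "'v::ab_group_add \<Rightarrow> 'v \<Rightarrow> complex"
  assumes ip: "inner_product_form sc UNIV f" and K: "\<And>x. ipnorm f (T x) \<le> K * ipnorm f x"
  shows "ipnorm f (T x) \<le> opnorm f T * ipnorm f x"
proof -
  interpret inner_product_form sc UNIV f by (fact ip)
  show ?thesis
  proof (cases "x = 0")
    case True
    then show ?thesis using K[of 0] ipnorm_zero by simp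
  next
    case False
    then have "0 < ipnorm f x" using ipnorm_pos by simp
    then show ?thesis using opnorm_ratio_le[OF ip K False] by (simp add: divide_le_eq)
  qed
qed

lemma opnorm_nonneg:
  fixes f :: "'v::ab_group_add \<Rightarrow> 'v \<Rightarrow> complex"
  assumes ip: "inner_product_form sc UNIV f" and K: "\<And>x. ipnorm f (T x) \<le> K * ipnorm f x"
    and x: "(x :: 'v) \<noteq> 0"
  shows "0 \<le> opnorm f T"
proof -
  interpret inner_product_form sc UNIV f by (fact ip)
  show ?thesis
    using opnorm_ratio_le[OF ip K x] ipnorm_nonneg[OF UNIV_I, of x] ipnorm_nonneg[OF UNIV_I, of "T x"]
    by (meson divide_nonneg_nonneg order_trans)
qed

lemma invertible_if_kernel_trivial:
  fixes A :: "'a::field^'n^'n"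
  assumes "\<And>V. A *v V = 0 \<Longrightarrow> V = 0"
  shows "invertible A"
proof -
  have "\<exists>B. B ** A = mat 1" using assms matrix_left_invertible_ker by blast
  then show ?thesis using invertible_left_inverse by blast
qed

lemma matrix_mul_right_inverse:
  fixes A :: "'a::field^'n^'n"
  assumes "invertible A"
  shows "A ** matrix_inv A = mat 1"
proof -
  have "\<exists>A'. A ** A' = mat 1 \<and> A' ** A = mat 1" using assms unfolding invertible_def .
  then have "A ** matrix_inv A = mat 1 \<and> matrix_inv A ** A = mat 1"
    unfolding matrix_inv_def by (rule someI_ex)
  then show ?thesis ..
qed

lemma matrix_inv_mat_1: "matrix_inv (mat 1 :: 'a::field^'n^'n) = mat 1"
proof -
  have "invertible (mat 1 :: 'a^'n^'n)" unfolding invertible_def by (auto simp: matrix_mul_lid)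
  then show ?thesis using matrix_mul_right_inverse[of "mat 1 :: 'a^'n^'n"] by (simp add: matrix_mul_lid)
qed

definition weighted_ip :: "complex^'n^'n \<Rightarrow> complex^'n \<Rightarrow> complex^'n \<Rightarrow> complex" where
  "weighted_ip M V W = ip2 (M *v V) W"

lemma wnorm_eq_ipnorm: "wnorm M = ipnorm (weighted_ip M)"
  by (simp add: fun_eq_iff wnorm_def ipnorm_def weighted_ip_def)

lemma ip2_self: "ip2 V V = of_real ((norm V)^2)"
proof -
  have "ip2 V V = (\<Sum>i\<in>UNIV. of_real ((cmod (V $ i))^2))"
    unfolding ip2_def by (simp only: complex_norm_square)
  then show ?thesis unfolding norm_vec_def L2_set_def by (simp add: sum_nonneg)
qed

lemma wnorm_mat_1: "wnorm (mat 1) V = norm V"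
  by (simp add: wnorm_def ip2_self)

lemma weighted_ip_inner_product_form:
  fixes D :: "complex^'n::finite^'n"
  assumes herm: "\<And>i j. D $ i $ j = cnj (D $ j $ i)"
    and pos: "\<And>V. V \<noteq> 0 \<Longrightarrow> 0 < Re (ip2 (D *v V) V)"
  shows "inner_product_form (*s) UNIV (weighted_ip D)"
proof -
  have herm': "cnj (D $ i $ j) = D $ j $ i" for i j
    using herm[of j i] by simp
  have conj_sym: "weighted_ip D Y X = cnj (weighted_ip D X Y)" for X Y
  proof -
    have "weighted_ip D Y X = (\<Sum>i\<in>UNIV. \<Sum>j\<in>UNIV. D $ i $ j * Y $ j * cnj (X $ i))"
      unfolding weighted_ip_def ip2_def matrix_vector_mult_def by (simp add: sum_distrib_right)
    also have "\<dots> = cnj (\<Sum>j\<in>UNIV. \<Sum>i\<in>UNIV. D $ j $ i * X $ i * cnj (Y $ j))"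
      by (subst sum.swap) (simp add: herm' mult.commute mult.left_commute)
    also have "\<dots> = cnj (weighted_ip D X Y)"
      unfolding weighted_ip_def ip2_def matrix_vector_mult_def by (simp add: sum_distrib_right)
    finally show ?thesis .
  qed
  have nonneg: "0 \<le> Re (weighted_ip D V V)" for V
    using pos[of V] by (cases "V = 0") (simp_all add: weighted_ip_def ip2_def less_imp_le)
  have add_left: "weighted_ip D (X + Y) Z = weighted_ip D X Z + weighted_ip D Y Z" for X Y Z
    by (simp add: weighted_ip_def ip2_def matrix_vector_right_distrib distrib_right sum.distrib)
  have scale_left: "weighted_ip D (c *s X) Y = c * weighted_ip D X Y" for c X Y
    by (simp add: weighted_ip_def ip2_def vector_scalar_commute sum_distrib_left mult.assoc)
  have definite: "V = 0" if "weighted_ip D V V = 0" for V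
  proof (rule ccontr)
    assume "V \<noteq> 0"
    then show False using pos[of V] that by (simp add: weighted_ip_def)
  qed
  have "hermitian_form (*s) UNIV (weighted_ip D)"
    by (rule hermitian_formI) (rule UNIV_I add_left scale_left conj_sym nonneg)+
  with definite show ?thesis
    unfolding inner_product_form_def inner_product_form_axioms_def by blast
qed

lemma ip2_conj_sym: "ip2 V W = cnj (ip2 W V)"
  unfolding ip2_def by (simp add: mult.commute)

lemma ip2_diff_left: "ip2 (V - W) Y = ip2 V Y - ip2 W Y"
  unfolding ip2_def by (simp add: left_diff_distrib sum_subtractf)

locale hermitian_pos_def =
  fixes D :: "complex^'n::finite^'n"
  assumes inner_product_form: "inner_product_form (*s) UNIV (weighted_ip D)"
begin

sublocale ip: inner_product_form "(*s)" UNIV "weighted_ip D"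
  by (fact inner_product_form)

lemma wnorm_nonneg: "0 \<le> wnorm D V"
  by (simp add: wnorm_eq_ipnorm ip.ipnorm_nonneg)

lemma wnorm_pos: "V \<noteq> 0 \<Longrightarrow> 0 < wnorm D V"
  by (simp add: wnorm_eq_ipnorm ip.ipnorm_pos)

lemma invertible_D: "invertible D"
proof (rule invertible_if_kernel_trivial)
  fix V assume "D *v V = 0"
  then show "V = 0" using ip.definite[of V] by (simp add: weighted_ip_def ip2_def)
qed

lemma mult_matrix_inv_apply: "D *v (matrix_inv D *v V) = V"
  by (simp add: matrix_vector_mul_assoc matrix_mul_right_inverse[OF invertible_D])

lemma wnorm_matrix_inv: "wnorm (matrix_inv D) V = wnorm D (matrix_inv D *v V)"
  unfolding wnorm_def mult_matrix_inv_apply by (subst ip2_conj_sym) simp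

lemma wnorm_matrix_inv_pos: "V \<noteq> 0 \<Longrightarrow> 0 < wnorm (matrix_inv D) V"
  by (metis wnorm_matrix_inv wnorm_pos mult_matrix_inv_apply matrix_vector_mult_0_right)

lemma ip2_le_wnorm_inv_wnorm: "cmod (ip2 V Y) \<le> wnorm (matrix_inv D) V * wnorm D Y"
  unfolding wnorm_matrix_inv using ip.cauchy_schwarz[of "matrix_inv D *v V" Y]
  by (simp add: weighted_ip_def mult_matrix_inv_apply wnorm_eq_ipnorm)

lemma wnorm_inv_le_if_dual_bound:
  assumes "0 \<le> c" and "\<And>Y. cmod (ip2 Z Y) \<le> c * wnorm D Y"
  shows "wnorm (matrix_inv D) Z \<le> c"
  unfolding wnorm_matrix_inv using ip.ipnorm_le_if_dual_bound[of "matrix_inv D *v Z" c] assms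
  by (simp add: weighted_ip_def mult_matrix_inv_apply wnorm_eq_ipnorm)

end

interpretation euclidean: hermitian_pos_def "mat 1 :: complex^'n::finite^'n"
proof (rule hermitian_pos_def.intro, rule weighted_ip_inner_product_form)
  show "(mat 1 :: complex^'n^'n) $ i $ j = cnj (mat 1 $ j $ i)" for i j
    by (simp add: mat_def)
qed (simp add: ip2_self)

lemma ip2_cauchy_schwarz: "cmod (ip2 V Y) \<le> norm V * norm Y"
  using euclidean.ip2_le_wnorm_inv_wnorm by (simp add: matrix_inv_mat_1 wnorm_mat_1)

lemma norm_le_if_ip2_bound:
  assumes "0 \<le> c" and "\<And>Y. cmod (ip2 Z Y) \<le> c * norm Y"
  shows "norm Z \<le> c"
  using euclidean.wnorm_inv_le_if_dual_bound[of c Z] assms by (simp add: matrix_inv_mat_1 wnorm_mat_1)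

lemma matnorm_le:
  fixes M :: "complex^'n^'n"
  assumes "\<And>V. V \<noteq> 0 \<Longrightarrow> nv (M *v V) \<le> c * nv V" and "\<And>V. V \<noteq> 0 \<Longrightarrow> 0 < nv V"
  shows "matnorm nv M \<le> c"
  unfolding matnorm_def
proof (rule cSup_least)
  have "(axis undefined 1 :: complex^'n) \<noteq> 0" by (simp add: axis_def vec_eq_iff)
  then show "{nv (M *v V) / nv V |V. V \<noteq> 0} \<noteq> {}" by blast
next
  fix r assume "r \<in> {nv (M *v V) / nv V |V. V \<noteq> 0}"
  then obtain V where "r = nv (M *v V) / nv V" and "V \<noteq> 0" by blast
  then show "r \<le> c" using assms by (simp add: divide_le_eq)
qed

(* Matrix form of the inf-sup condition with constant 1/C on the discrete space. *)

definition discrete_inf_sup :: "complex^'n^'n \<Rightarrow> complex^'n^'n \<Rightarrow> real \<Rightarrow> bool" where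
  "discrete_inf_sup D A C \<longleftrightarrow>
     (\<forall>W c. 0 \<le> c \<longrightarrow> (\<forall>Y. cmod (ip2 (A *v W) Y) \<le> c * wnorm D Y) \<longrightarrow> wnorm D W \<le> C * c)"

(* n is the norm in which A2 - A1 is small; n <= |.|_D is all that the D-norm bounds need. *)
locale inf_sup_perturbation = hermitian_pos_def +
  fixes A1 A2 :: "complex^'n^'n" and C K :: real and n :: "complex^'n \<Rightarrow> real"
  assumes inf_sup: "discrete_inf_sup D A2 C"
    and diff_bound: "cmod (ip2 ((A2 - A1) *v V) Y) \<le> K * n V * n Y"
    and n_nonneg: "0 \<le> n V"
    and n_le_wnorm: "n V \<le> wnorm D V"
    and C_nonneg: "0 \<le> C"
    and K_nonneg: "0 \<le> K"
begin

lemma inf_sup_bound: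
  "0 \<le> c \<Longrightarrow> (\<And>Y. cmod (ip2 (A2 *v W) Y) \<le> c * wnorm D Y) \<Longrightarrow> wnorm D W \<le> C * c"
  using inf_sup unfolding discrete_inf_sup_def by blast

lemma invertible_A2: "invertible A2"
proof (rule invertible_if_kernel_trivial)
  fix W assume "A2 *v W = 0"
  then have "wnorm D W \<le> C * 0" by (intro inf_sup_bound) (simp_all add: ip2_def)
  then show "W = 0" using wnorm_pos[of W] by fastforce
qed

lemma A2_matrix_inv_apply: "A2 *v (matrix_inv A2 *v V) = V"
  by (simp add: matrix_vector_mul_assoc matrix_mul_right_inverse[OF invertible_A2])

lemma wnorm_left_residual_le: "wnorm D ((mat 1 - matrix_inv A2 ** A1) *v V) \<le> C * (K * n V)"
proof (rule inf_sup_bound)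
  show "0 \<le> K * n V" by (simp add: K_nonneg n_nonneg)
  have "A2 *v ((mat 1 - matrix_inv A2 ** A1) *v V) = (A2 - A1) *v V"
    by (simp add: matrix_vector_mult_diff_rdistrib matrix_vector_mult_diff_distrib
        matrix_vector_mul_assoc[symmetric] A2_matrix_inv_apply)
  then have "cmod (ip2 (A2 *v ((mat 1 - matrix_inv A2 ** A1) *v V)) Y) \<le> K * n V * n Y" for Y
    by (simp add: diff_bound)
  also have "K * n V * n Y \<le> K * n V * wnorm D Y" for Y
    by (rule mult_left_mono[OF n_le_wnorm]) (simp add: K_nonneg n_nonneg)
  finally show "cmod (ip2 (A2 *v ((mat 1 - matrix_inv A2 ** A1) *v V)) Y) \<le> K * n V * wnorm D Y" for Y .
qed

lemma ip2_right_residual_le: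
  assumes "0 \<le> c" and V: "\<And>Y. cmod (ip2 V Y) \<le> c * wnorm D Y"
  shows "cmod (ip2 ((mat 1 - A1 ** matrix_inv A2) *v V) Y) \<le> K * (C * c) * n Y"
proof -
  let ?W = "matrix_inv A2 *v V"
  have "(mat 1 - A1 ** matrix_inv A2) *v V = (A2 - A1) *v ?W"
    by (simp add: matrix_vector_mult_diff_rdistrib matrix_vector_mul_assoc[symmetric] A2_matrix_inv_apply)
  moreover have "n ?W \<le> C * c"
    using n_le_wnorm[of ?W] inf_sup_bound[OF \<open>0 \<le> c\<close>, of ?W] V by (simp add: A2_matrix_inv_apply)
  then have "K * n ?W * n Y \<le> K * (C * c) * n Y"
    by (intro mult_right_mono mult_left_mono) (simp_all add: K_nonneg n_nonneg)
  ultimately show ?thesis using diff_bound[of ?W Y] by simp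
qed

lemma matnorm_wnorm_left_residual_le: "matnorm (wnorm D) (mat 1 - matrix_inv A2 ** A1) \<le> K * C"
proof (rule matnorm_le[OF _ wnorm_pos])
  fix V
  have "wnorm D ((mat 1 - matrix_inv A2 ** A1) *v V) \<le> C * (K * n V)"
    by (rule wnorm_left_residual_le)
  also have "\<dots> \<le> C * (K * wnorm D V)"
    by (intro mult_left_mono n_le_wnorm) (simp_all add: C_nonneg K_nonneg)
  finally show "wnorm D ((mat 1 - matrix_inv A2 ** A1) *v V) \<le> K * C * wnorm D V"
    by (simp add: mult_ac)
qed

lemma matnorm_wnorm_inv_right_residual_le:
  "matnorm (wnorm (matrix_inv D)) (mat 1 - A1 ** matrix_inv A2) \<le> K * C"
proof (rule matnorm_le[OF _ wnorm_matrix_inv_pos])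
  fix V
  let ?c = "wnorm (matrix_inv D) V"
  have "0 \<le> ?c" using wnorm_matrix_inv wnorm_nonneg by simp
  show "wnorm (matrix_inv D) ((mat 1 - A1 ** matrix_inv A2) *v V) \<le> K * C * ?c"
  proof (rule wnorm_inv_le_if_dual_bound)
    show "0 \<le> K * C * ?c" using \<open>0 \<le> ?c\<close> K_nonneg C_nonneg by simp
    fix Y
    have "cmod (ip2 ((mat 1 - A1 ** matrix_inv A2) *v V) Y) \<le> K * (C * ?c) * n Y"
      by (rule ip2_right_residual_le[OF \<open>0 \<le> ?c\<close> ip2_le_wnorm_inv_wnorm])
    also have "\<dots> \<le> K * (C * ?c) * wnorm D Y"
      by (intro mult_left_mono n_le_wnorm) (simp add: \<open>0 \<le> ?c\<close> C_nonneg K_nonneg)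
    finally show "cmod (ip2 ((mat 1 - A1 ** matrix_inv A2) *v V) Y) \<le> K * C * ?c * wnorm D Y"
      by (simp add: mult_ac)
  qed
qed

lemma matnorm_left_residual_le:
  assumes m: "0 < mminus" "\<And>V. mminus * norm V \<le> n V" "\<And>V. n V \<le> mplus * norm V"
  shows "matnorm norm (mat 1 - matrix_inv A2 ** A1) \<le> mplus / mminus * K * C"
proof (rule matnorm_le)
  fix V
  let ?W = "(mat 1 - matrix_inv A2 ** A1) *v V"
  have "mminus * norm ?W \<le> wnorm D ?W" using m(2) n_le_wnorm order_trans by blast
  also have "\<dots> \<le> C * (K * n V)" by (rule wnorm_left_residual_le)
  also have "\<dots> \<le> C * (K * (mplus * norm V))"
    by (intro mult_left_mono m(3)) (simp_all add: C_nonneg K_nonneg)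
  finally show "norm ?W \<le> mplus / mminus * K * C * norm V"
    using m(1) by (simp add: field_simps)
qed simp

lemma matnorm_right_residual_le:
  assumes m: "0 < mminus" "\<And>V. mminus * norm V \<le> n V" "\<And>V. n V \<le> mplus * norm V"
  shows "matnorm norm (mat 1 - A1 ** matrix_inv A2) \<le> mplus / mminus * K * C"
proof (rule matnorm_le)
  fix V :: "complex^'n"
  let ?c = "norm V / mminus"
  have "0 \<le> ?c" using m(1) by simp
  have V_bound: "cmod (ip2 V Y) \<le> ?c * wnorm D Y" for Y
  proof -
    have "mminus * norm Y \<le> wnorm D Y" using m(2) n_le_wnorm order_trans by blast
    then have "norm V * norm Y \<le> ?c * wnorm D Y"
      using m(1) mult_left_mono[of "mminus * norm Y" "wnorm D Y" "norm V"] by (simp add: field_simps)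
    then show ?thesis using ip2_cauchy_schwarz order_trans by blast
  qed
  show "norm ((mat 1 - A1 ** matrix_inv A2) *v V) \<le> mplus / mminus * K * C * norm V"
  proof (rule norm_le_if_ip2_bound)
    have "0 \<le> mplus * norm V"
      using m(2)[of V] m(3)[of V] mult_nonneg_nonneg[OF less_imp_le[OF m(1)] norm_ge_zero[of V]]
      by linarith
    then have "0 \<le> mplus * norm V * K * C / mminus"
      using m(1) K_nonneg C_nonneg by simp
    then show "0 \<le> mplus / mminus * K * C * norm V" by (simp add: field_simps)
    fix Y
    have "cmod (ip2 ((mat 1 - A1 ** matrix_inv A2) *v V) Y) \<le> K * (C * ?c) * n Y"
      by (rule ip2_right_residual_le[OF \<open>0 \<le> ?c\<close> V_bound])
    also have "\<dots> \<le> K * (C * ?c) * (mplus * norm Y)"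
      by (intro mult_left_mono m(3) mult_nonneg_nonneg K_nonneg C_nonneg \<open>0 \<le> ?c\<close>)
    finally show "cmod (ip2 ((mat 1 - A1 ** matrix_inv A2) *v V) Y) \<le> mplus / mminus * K * C * norm V * norm Y"
      using m(1) by (simp add: field_simps)
  qed
qed simp

end

lemma cont_sesq_sesquilinear_form:
  assumes "cont_sesq sc S ip b" and "sesquilinear_form sc S ip"
  shows "sesquilinear_form sc S b"
proof -
  interpret sesquilinear_form sc S ip by fact
  show ?thesis
    by unfold_locales (use assms(1) in \<open>simp_all add: cont_sesq_def zero_mem add_mem scale_mem\<close>)
qed

lemma bounded_op_diff:
  assumes ip: "inner_product_form sc UNIV f" and "bounded_op sc f T1" and "bounded_op sc f T2"
  shows "\<exists>K. \<forall>x. ipnorm f (T1 x - T2 x) \<le> K * ipnorm f x"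
proof -
  interpret inner_product_form sc UNIV f by (fact ip)
  obtain K1 K2 where K1: "\<And>x. ipnorm f (T1 x) \<le> K1 * ipnorm f x"
    and K2: "\<And>x. ipnorm f (T2 x) \<le> K2 * ipnorm f x"
    using assms(2,3) unfolding bounded_op_def by metis
  have "ipnorm f (T1 x - T2 x) \<le> (K1 + K2) * ipnorm f x" for x
    using ipnorm_diff_le[of "T1 x" "T2 x"] K1[of x] K2[of x] by (simp add: distrib_right)
  then show ?thesis by blast
qed

locale galerkin_pair = hermitian_pos_def D
  for D :: "complex^'n::finite^'n" +
  fixes sc :: "complex \<Rightarrow> 'v::ab_group_add \<Rightarrow> 'v"
    and H :: "'v set"
    and ip0 ipH :: "'v \<Rightarrow> 'v \<Rightarrow> complex"
    and Dop :: "'v \<Rightarrow> 'v"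
    and b :: "'v \<Rightarrow> 'v \<Rightarrow> complex"
    and mu1 mu2 eps1 eps2 :: "'v \<Rightarrow> 'v"
    and phi :: "'n \<Rightarrow> 'v"
    and A1 A2 :: "complex^'n^'n"
  assumes cinner_ip0: "cinner_space sc UNIV ip0"
    and cinner_ipH: "cinner_space sc H ipH"
    and norm_le: "v \<in> H \<Longrightarrow> ipnorm ip0 v \<le> ipnorm ipH v"
    and Dlin: "clinear_on sc sc H Dop"
    and Dnorm: "u \<in> H \<Longrightarrow> ipnorm ip0 (Dop u) \<le> ipnorm ipH u"
    and bcont: "cont_sesq sc H ipH b"
    and mu1: "bounded_op sc ip0 mu1" and mu2: "bounded_op sc ip0 mu2"
    and eps1: "bounded_op sc ip0 eps1" and eps2: "bounded_op sc ip0 eps2"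
    and phiH: "phi j \<in> H"
    and phi_indep: "comb sc phi V = 0 \<Longrightarrow> V = 0"
    and A1_entries: "A1 $ i $ j = aform ip0 Dop b mu1 eps1 (phi j) (phi i)"
    and A2_entries: "A2 $ i $ j = aform ip0 Dop b mu2 eps2 (phi j) (phi i)"
    and D_norm: "ipnorm ipH (comb sc phi V) = wnorm D V"
begin

sublocale ip0: inner_product_form sc UNIV ip0
  by (rule cinner_space_inner_product_form[OF cinner_ip0])

sublocale ipH: inner_product_form sc H ipH
  by (rule cinner_space_inner_product_form[OF cinner_ipH])

abbreviation "a1 \<equiv> aform ip0 Dop b mu1 eps1"
abbreviation "a2 \<equiv> aform ip0 Dop b mu2 eps2"
abbreviation "Emu \<equiv> opnorm ip0 (\<lambda>v. mu1 v - mu2 v)"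
abbreviation "Eeps \<equiv> opnorm ip0 (\<lambda>v. eps1 v - eps2 v)"
abbreviation "n0 V \<equiv> ipnorm ip0 (comb sc phi V)"

lemma aform_sesquilinear_form:
  assumes "clinear_on sc sc UNIV mu" and "clinear_on sc sc UNIV eps"
  shows "sesquilinear_form sc H (aform ip0 Dop b mu eps)"
proof -
  interpret b: sesquilinear_form sc H b
    by (rule cont_sesq_sesquilinear_form[OF bcont]) unfold_locales
  show ?thesis
    by unfold_locales
      (use assms Dlin in \<open>simp_all add: clinear_on_def aform_def ipH.add_mem ipH.scale_mem ipH.zero_mem
        ip0.add_left ip0.add_right ip0.scale_left ip0.scale_right
        b.add_left b.add_right b.scale_left b.scale_right algebra_simps\<close>)
qed

lemma comb_mem: "comb sc phi V \<in> H"
  by (rule ipH.comb_mem[OF phiH])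

lemma galerkin_A1: "a1 (comb sc phi V) (comb sc phi Y) = ip2 (A1 *v V) Y"
  by (rule sesquilinear_form.galerkin_matrix[OF aform_sesquilinear_form phiH A1_entries])
    (use mu1 eps1 in \<open>simp_all add: bounded_op_def\<close>)

lemma galerkin_A2: "a2 (comb sc phi V) (comb sc phi Y) = ip2 (A2 *v V) Y"
  by (rule sesquilinear_form.galerkin_matrix[OF aform_sesquilinear_form phiH A2_entries])
    (use mu2 eps2 in \<open>simp_all add: bounded_op_def\<close>)

lemma galerkin_diff:
  "ip2 ((A2 - A1) *v V) Y = a2 (comb sc phi V) (comb sc phi Y) - a1 (comb sc phi V) (comb sc phi Y)"
  by (simp add: galerkin_A1 galerkin_A2 matrix_vector_mult_diff_rdistrib ip2_diff_left)

lemma exists_nonzero: "\<exists>x::'v. x \<noteq> 0"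
proof -
  have "(axis undefined 1 :: complex^'n) \<noteq> 0" by (simp add: axis_def vec_eq_iff)
  then show ?thesis using phi_indep by blast
qed

lemma opnorm_diff:
  assumes "bounded_op sc ip0 T1" and "bounded_op sc ip0 T2"
  shows "ipnorm ip0 (T1 x - T2 x) \<le> opnorm ip0 (\<lambda>v. T1 v - T2 v) * ipnorm ip0 x"
    and "0 \<le> opnorm ip0 (\<lambda>v. T1 v - T2 v)"
proof -
  obtain K where K: "\<And>x. ipnorm ip0 (T1 x - T2 x) \<le> K * ipnorm ip0 x"
    using bounded_op_diff[OF ip0.inner_product_form_axioms assms] by blast
  show "ipnorm ip0 (T1 x - T2 x) \<le> opnorm ip0 (\<lambda>v. T1 v - T2 v) * ipnorm ip0 x"
    by (rule opnorm_bound[OF ip0.inner_product_form_axioms K])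
  show "0 \<le> opnorm ip0 (\<lambda>v. T1 v - T2 v)"
    using exists_nonzero opnorm_nonneg[OF ip0.inner_product_form_axioms K] by blast
qed

lemma opnorm_self_diff: "opnorm ip0 (\<lambda>v. T v - T v) = 0"
proof -
  have "{ipnorm ip0 (T x - T x) / ipnorm ip0 x | x. x \<noteq> 0} = {0}"
    using exists_nonzero ip0.ipnorm_zero by auto
  then show ?thesis unfolding opnorm_def by simp
qed

lemma n0_le_wnorm: "n0 V \<le> wnorm D V"
  using norm_le[OF comb_mem] D_norm by simp

lemma galerkin_diff_bound:
  "cmod (ip2 ((A2 - A1) *v V) Y)
     \<le> Emu * ipnorm ip0 (Dop (comb sc phi V)) * ipnorm ip0 (Dop (comb sc phi Y)) + Eeps * n0 V * n0 Y"
proof -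
  let ?u = "comb sc phi V" and ?v = "comb sc phi Y"
  have "a1 ?u ?v - a2 ?u ?v = ip0 (mu1 (Dop ?u) - mu2 (Dop ?u)) (Dop ?v) - ip0 (eps1 ?u - eps2 ?u) ?v"
    unfolding aform_def by (simp add: ip0.diff_left)
  then have "cmod (ip2 ((A2 - A1) *v V) Y)
      \<le> cmod (ip0 (mu1 (Dop ?u) - mu2 (Dop ?u)) (Dop ?v)) + cmod (ip0 (eps1 ?u - eps2 ?u) ?v)"
    unfolding galerkin_diff by (metis norm_minus_commute norm_triangle_ineq4)
  also have "\<dots> \<le> ipnorm ip0 (mu1 (Dop ?u) - mu2 (Dop ?u)) * ipnorm ip0 (Dop ?v)
      + ipnorm ip0 (eps1 ?u - eps2 ?u) * ipnorm ip0 ?v"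
    by (intro add_mono ip0.cauchy_schwarz UNIV_I)
  also have "\<dots> \<le> Emu * ipnorm ip0 (Dop ?u) * ipnorm ip0 (Dop ?v) + Eeps * n0 V * n0 Y"
    by (intro add_mono mult_right_mono opnorm_diff(1) mu1 mu2 eps1 eps2 ip0.ipnorm_nonneg UNIV_I)
  finally show ?thesis .
qed

lemma inf_sup_perturbation_wnorm:
  assumes "discrete_inf_sup D A2 C" and "0 \<le> C"
  shows "inf_sup_perturbation D A1 A2 C (Emu + Eeps) (wnorm D)"
proof (intro inf_sup_perturbation.intro inf_sup_perturbation_axioms.intro hermitian_pos_def_axioms)
  fix V Y
  have Emu: "0 \<le> Emu" and Eeps: "0 \<le> Eeps" using opnorm_diff(2) mu1 mu2 eps1 eps2 by blast+
  have "ipnorm ip0 (Dop (comb sc phi V)) \<le> wnorm D V" for V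
    using Dnorm[OF comb_mem] D_norm by simp
  then have "Emu * ipnorm ip0 (Dop (comb sc phi V)) * ipnorm ip0 (Dop (comb sc phi Y)) + Eeps * n0 V * n0 Y
      \<le> Emu * wnorm D V * wnorm D Y + Eeps * wnorm D V * wnorm D Y"
    by (intro add_mono mult_mono mult_left_mono n0_le_wnorm Emu Eeps ip0.ipnorm_nonneg UNIV_I
        mult_nonneg_nonneg wnorm_nonneg)
  then show "cmod (ip2 ((A2 - A1) *v V) Y) \<le> (Emu + Eeps) * wnorm D V * wnorm D Y"
    using galerkin_diff_bound[of V Y] by (simp add: algebra_simps)
  show "0 \<le> Emu + Eeps" using Emu Eeps by simp
qed (simp_all add: assms wnorm_nonneg)

lemma inf_sup_perturbation_n0:
  assumes "discrete_inf_sup D A2 C" and "0 \<le> C" and "mu1 = mu2"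
  shows "inf_sup_perturbation D A1 A2 C Eeps n0"
proof (intro inf_sup_perturbation.intro inf_sup_perturbation_axioms.intro hermitian_pos_def_axioms)
  show "cmod (ip2 ((A2 - A1) *v V) Y) \<le> Eeps * n0 V * n0 Y" for V Y
    using galerkin_diff_bound[of V Y] \<open>mu1 = mu2\<close> opnorm_self_diff by simp
qed (simp_all add: assms n0_le_wnorm ip0.ipnorm_nonneg opnorm_diff(2) eps1 eps2)

lemma discrete_inf_sup_if_inf_sup:
  assumes C: "0 < C"
    and inf_sup: "(INF u\<in>range (comb sc phi) - {0}. SUP v\<in>range (comb sc phi) - {0}.
                    ereal (cmod (a2 u v) / (ipnorm ipH u * ipnorm ipH v))) \<ge> ereal (1 / C)"
  shows "discrete_inf_sup D A2 C"
  unfolding discrete_inf_sup_def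
proof (intro allI impI)
  fix W :: "complex^'n" and c :: real
  assume c: "0 \<le> c" and bound: "\<forall>Y. cmod (ip2 (A2 *v W) Y) \<le> c * wnorm D Y"
  show "wnorm D W \<le> C * c"
  proof (cases "W = 0")
    case True
    then show ?thesis using c C ip.ipnorm_zero by (simp add: wnorm_eq_ipnorm)
  next
    case False
    let ?u = "comb sc phi W"
    have u: "?u \<in> range (comb sc phi) - {0}" using phi_indep False by blast
    have nu: "0 < ipnorm ipH ?u" using D_norm wnorm_pos False by simp
    have "ereal (1 / C) \<le> (SUP v\<in>range (comb sc phi) - {0}. ereal (cmod (a2 ?u v) / (ipnorm ipH ?u * ipnorm ipH v)))"
      using inf_sup INF_lower[OF u] by (rule order_trans)
    also have "\<dots> \<le> ereal (c / ipnorm ipH ?u)"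
    proof (rule SUP_least)
      fix v assume "v \<in> range (comb sc phi) - {0}"
      then obtain Y where v: "v = comb sc phi Y" and "v \<noteq> 0" by blast
      then have nv: "0 < ipnorm ipH v" using ipH.ipnorm_pos comb_mem by simp
      have "cmod (a2 ?u v) \<le> c * ipnorm ipH v"
        using bound v by (simp add: galerkin_A2 D_norm)
      then have "cmod (a2 ?u v) / (ipnorm ipH ?u * ipnorm ipH v) \<le> c / ipnorm ipH ?u"
        using nu nv by (simp add: field_simps)
      then show "ereal (cmod (a2 ?u v) / (ipnorm ipH ?u * ipnorm ipH v)) \<le> ereal (c / ipnorm ipH ?u)"
        by simp
    qed
    finally have "1 / C \<le> c / ipnorm ipH ?u" by simp
    then show ?thesis using nu C D_norm by (simp add: field_simps)
  qed
qed

end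

theorem lemma5p1:
  fixes sc :: "complex \<Rightarrow> 'v::ab_group_add \<Rightarrow> 'v"
    and H :: "'v set"
    and ip0 ipH :: "'v \<Rightarrow> 'v \<Rightarrow> complex"
    and Dop mu1 mu2 eps1 eps2 :: "'v \<Rightarrow> 'v"
    and b :: "'v \<Rightarrow> 'v \<Rightarrow> complex"
    and phi :: "'n::finite \<Rightarrow> 'v"
    and A1 A2 D :: "complex^'n^'n"
    and mminus mplus Cdis :: real
  assumes vs: "vector_space sc"
    and H0: "hilbert_space sc UNIV ip0"
    and H: "hilbert_space sc H ipH"
    and norm_le: "\<forall>v\<in>H. ipnorm ip0 v \<le> ipnorm ipH v"
    and Dlin: "clinear_on sc sc H Dop"
    and Dnorm: "\<forall>u\<in>H. ipnorm ip0 (Dop u) \<le> ipnorm ipH u"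
    and bcont: "cont_sesq sc H ipH b"
    and mu1: "bounded_op sc ip0 mu1" and mu2: "bounded_op sc ip0 mu2"
    and eps1: "bounded_op sc ip0 eps1" and eps2: "bounded_op sc ip0 eps2"
    and garding1: "\<exists>CG1>0. \<exists>CG2>0. \<forall>v\<in>H.
       cmod (aform ip0 Dop b mu1 eps1 v v + of_real (CG2 * (ipnorm ip0 v)\<^sup>2)) \<ge> CG1 * (ipnorm ipH v)\<^sup>2"
    and garding2: "\<exists>CG1>0. \<exists>CG2>0. \<forall>v\<in>H.
       cmod (aform ip0 Dop b mu2 eps2 v v + of_real (CG2 * (ipnorm ip0 v)\<^sup>2)) \<ge> CG1 * (ipnorm ipH v)\<^sup>2"
    and phiH: "\<forall>j. phi j \<in> H"
    and phi_indep: "\<forall>V. comb sc phi V = 0 \<longrightarrow> V = 0"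
    and A1_def: "\<forall>i j. A1 $ i $ j = aform ip0 Dop b mu1 eps1 (phi j) (phi i)"
    and A2_def: "\<forall>i j. A2 $ i $ j = aform ip0 Dop b mu2 eps2 (phi j) (phi i)"
    and D_herm: "\<forall>i j. D $ i $ j = cnj (D $ j $ i)"
    and D_pd: "\<forall>V. V \<noteq> 0 \<longrightarrow> Im (ip2 (D *v V) V) = 0 \<and> Re (ip2 (D *v V) V) > 0"
    and D_norm: "\<forall>V. ipnorm ipH (comb sc phi V) = wnorm D V"
    and mpos: "mminus > 0" "mplus > 0"
    and m_bounds: "\<forall>V. mminus * norm V \<le> ipnorm ip0 (comb sc phi V) \<and>
                        ipnorm ip0 (comb sc phi V) \<le> mplus * norm V"
    and Cdis_pos: "Cdis > 0"
    and infsup: "(INF u\<in>range (comb sc phi) - {0}. SUP v\<in>range (comb sc phi) - {0}.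
                    ereal (cmod (aform ip0 Dop b mu2 eps2 u v) / (ipnorm ipH u * ipnorm ipH v)))
                 \<ge> ereal (1 / Cdis)"
    and nondeg: "\<forall>v\<in>range (comb sc phi) - {0}.
                   (SUP u\<in>range (comb sc phi) - {0}. ereal (cmod (aform ip0 Dop b mu2 eps2 u v))) > 0"
  shows "invertible A2 \<and>
    max (matnorm (wnorm D) (mat 1 - matrix_inv A2 ** A1))
        (matnorm (wnorm (matrix_inv D)) (mat 1 - A1 ** matrix_inv A2))
      \<le> (opnorm ip0 (\<lambda>v. mu1 v - mu2 v) + opnorm ip0 (\<lambda>v. eps1 v - eps2 v)) * Cdis \<and>
    (mu1 = mu2 \<longrightarrow>
      max (matnorm norm (mat 1 - matrix_inv A2 ** A1))
          (matnorm norm (mat 1 - A1 ** matrix_inv A2))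
        \<le> mplus / mminus * opnorm ip0 (\<lambda>v. eps1 v - eps2 v) * Cdis)"
proof -
  \<comment> \<open>Not used: vs, the completeness of H0 and H, the Garding inequalities, and nondeg
    (which holds automatically in finite dimension once the inf-sup bound does).\<close>
  have "hermitian_pos_def D"
  proof (rule hermitian_pos_def.intro, rule weighted_ip_inner_product_form)
    show "D $ i $ j = cnj (D $ j $ i)" for i j using D_herm by blast
    show "0 < Re (ip2 (D *v V) V)" if "V \<noteq> 0" for V using D_pd that by blast
  qed
  then interpret galerkin_pair D sc H ip0 ipH Dop b mu1 mu2 eps1 eps2 phi A1 A2
  proof (rule galerkin_pair.intro, intro galerkin_pair_axioms.intro)
    show "cinner_space sc UNIV ip0" "cinner_space sc H ipH"
      using H0 H unfolding hilbert_space_def by blast+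
  qed (use norm_le Dlin Dnorm bcont mu1 mu2 eps1 eps2 phiH phi_indep A1_def A2_def D_norm in blast)+
  have inf_sup_A2: "discrete_inf_sup D A2 Cdis"
    by (rule discrete_inf_sup_if_inf_sup[OF Cdis_pos infsup])
  interpret in_H: inf_sup_perturbation D A1 A2 Cdis "Emu + Eeps" "wnorm D"
    by (rule inf_sup_perturbation_wnorm[OF inf_sup_A2]) (use Cdis_pos in simp)
  have "max (matnorm norm (mat 1 - matrix_inv A2 ** A1)) (matnorm norm (mat 1 - A1 ** matrix_inv A2))
      \<le> mplus / mminus * Eeps * Cdis" if "mu1 = mu2"
  proof -
    interpret in_H0: inf_sup_perturbation D A1 A2 Cdis Eeps n0
      by (rule inf_sup_perturbation_n0[OF inf_sup_A2 _ that]) (use Cdis_pos in simp)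
    show ?thesis
      using in_H0.matnorm_left_residual_le in_H0.matnorm_right_residual_le mpos(1) m_bounds by simp
  qed
  then show ?thesis
    using in_H.invertible_A2 in_H.matnorm_wnorm_left_residual_le
      in_H.matnorm_wnorm_inv_right_residual_le by simp
qed

end
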